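(* Let $X=(I,(\cdot,\cdot))$ be a Cartan datum and $\sigma$ an admissible diagram automorphism of $X$ of order $n=am$; put $\tau=\sigma^m$. Let $X^\tau=(I^\tau,(\cdot,\cdot)_\tau)$ be the Cartan datum induced from $(X,\tau)$, let $\underline\sigma$ be the permutation of $I^\tau$ induced by $\sigma$ (an admissible diagram automorphism of $X^\tau$), and let $(\underline I^\tau,(\cdot,\cdot)_2)$ be the Cartan datum induced from $(X^\tau,\underline\sigma)$. Identify $\underline I^\tau$ with the set $\underline I$ of $\sigma$-orbits in $I$ by sending a $\underline\sigma$-orbit $\tilde\eta$ to $\eta=\bigcup_{\gamma\in\tilde\eta}\gamma$. Then under $\alpha_{\tilde\eta}\mapsto\alpha_\eta$ one has $(\alpha_{\tilde\eta},\alpha_{\tilde\eta'})_2=(\alpha_\eta,\alpha_{\eta'})_1$ for all $\tilde\eta,\tilde\eta'$; hence the Cartan datum induced from $(X^\tau,\underline\sigma)$ is isomorphic to the Cartan datum $\underline X=(\underline I,(\cdot,\cdot)_1)$ induced from $(X,\sigma)$.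
   Context: A Cartan datum $X=(I,(\cdot,\cdot))$ is a finite set $I$ with a symmetric bilinear form on $\bigoplus_{i\in I}\mathbb Q\alpha_i$ such that $(\alpha_i,\alpha_j)\in\mathbb Z$, $(\alpha_i,\alpha_i)\in2\mathbb Z_{>0}$, and $2(\alpha_i,\alpha_j)/(\alpha_i,\alpha_i)\in\mathbb Z_{\le0}$ for $i\ne j$. A diagram automorphism is a permutation $\sigma$ of $I$ with $(\alpha_{\sigma(i)},\alpha_{\sigma(j)})=(\alpha_i,\alpha_j)$; it is admissible if $(\alpha_i,\alpha_j)=0$ for all distinct $i,j$ in the same $\sigma$-orbit. For such $\sigma$ with orbit set $\underline I$, the Cartan datum induced from $(X,\sigma)$ is $(\underline I,(\cdot,\cdot)_1)$ with form on $\bigoplus_{\eta\in\underline I}\mathbb Q\alpha_\eta$ given by $(\alpha_\eta,\alpha_\eta)_1=(\alpha_i,\alpha_i)|\eta|$ for any $i\in\eta$, and $(\alpha_\eta,\alpha_{\eta'})_1=\sum_{i\in\eta,j\in\eta'}(\alpha_i,\alpha_j)$ for $\eta\ne\eta'$. Two Cartan data are isomorphic if there is a bijection of index sets carrying one form to the other. *)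

theory Defs
  imports "HOL-Combinatorics.Permutations"
begin

text \<open>A Cartan datum is represented by a finite index set I together with the
values B i j = (alpha_i, alpha_j) of the symmetric bilinear form on the basis
(the form is determined by these values by bilinearity).\<close>

definition cartan_datum :: "'a set \<Rightarrow> ('a \<Rightarrow> 'a \<Rightarrow> int) \<Rightarrow> bool" where
  "cartan_datum I B \<longleftrightarrow> finite I \<and>
     (\<forall>i\<in>I. \<forall>j\<in>I. B i j = B j i) \<and>
     (\<forall>i\<in>I. B i i > 0 \<and> even (B i i)) \<and>
     (\<forall>i\<in>I. \<forall>j\<in>I. i \<noteq> j \<longrightarrow> B i i dvd 2 * B i j \<and> B i j \<le> 0)"

definition diagram_aut :: "'a set \<Rightarrow> ('a \<Rightarrow> 'a \<Rightarrow> int) \<Rightarrow> ('a \<Rightarrow> 'a) \<Rightarrow> bool" where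
  "diagram_aut I B \<sigma> \<longleftrightarrow> \<sigma> permutes I \<and> (\<forall>i\<in>I. \<forall>j\<in>I. B (\<sigma> i) (\<sigma> j) = B i j)"

definition orbit_of :: "('a \<Rightarrow> 'a) \<Rightarrow> 'a \<Rightarrow> 'a set" where
  "orbit_of \<sigma> i = {(\<sigma> ^^ k) i | k. True}"

definition orbits :: "'a set \<Rightarrow> ('a \<Rightarrow> 'a) \<Rightarrow> 'a set set" where
  "orbits I \<sigma> = orbit_of \<sigma> ` I"

definition admissible :: "'a set \<Rightarrow> ('a \<Rightarrow> 'a \<Rightarrow> int) \<Rightarrow> ('a \<Rightarrow> 'a) \<Rightarrow> bool" where
  "admissible I B \<sigma> \<longleftrightarrow> diagram_aut I B \<sigma> \<and>
     (\<forall>i\<in>I. \<forall>j\<in>orbit_of \<sigma> i. i \<noteq> j \<longrightarrow> B i j = 0)"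

definition perm_order_is :: "('a \<Rightarrow> 'a) \<Rightarrow> nat \<Rightarrow> bool" where
  "perm_order_is \<sigma> n \<longleftrightarrow> n > 0 \<and> \<sigma> ^^ n = id \<and> (\<forall>k. 0 < k \<and> k < n \<longrightarrow> \<sigma> ^^ k \<noteq> id)"

definition induced_form :: "('a \<Rightarrow> 'a \<Rightarrow> int) \<Rightarrow> 'a set \<Rightarrow> 'a set \<Rightarrow> int" where
  "induced_form B \<eta> \<eta>' =
     (if \<eta> = \<eta>' then B (SOME i. i \<in> \<eta>) (SOME i. i \<in> \<eta>) * int (card \<eta>)
      else (\<Sum>i\<in>\<eta>. \<Sum>j\<in>\<eta>'. B i j))"

definition cartan_iso :: "'a set \<Rightarrow> ('a \<Rightarrow> 'a \<Rightarrow> int) \<Rightarrow> 'b set \<Rightarrow> ('b \<Rightarrow> 'b \<Rightarrow> int) \<Rightarrow> bool" where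
  "cartan_iso I B J C \<longleftrightarrow> (\<exists>h. bij_betw h I J \<and> (\<forall>i\<in>I. \<forall>j\<in>I. C (h i) (h j) = B i j))"

end

theory Submission
  imports Defs
begin

(* Every \<sigma>-orbit \<eta> is the disjoint union of the \<tau>-orbits it contains, and since \<sigma>^k maps
   the \<tau>-orbit of i onto the \<tau>-orbit of \<sigma>^k i, these \<tau>-orbits form a single orbit of the
   induced permutation; so taking unions is a bijection onto the \<sigma>-orbits. Off the diagonal
   both induced forms are the same quadruple sum of B, grouped differently. On the diagonal,
   B is constant along the diagonal of \<eta> and all \<tau>-orbits inside \<eta> have the same size, so
   card \<eta> is their number times their common size. *)

lemma orbit_of_self: "i \<in> orbit_of f i"
  unfolding orbit_of_def by (auto intro: exI[of _ 0])

lemma orbit_of_trans: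
  assumes "j \<in> orbit_of f i"
  shows "orbit_of f j \<subseteq> orbit_of f i"
proof
  fix x assume "x \<in> orbit_of f j"
  then obtain l where "x = (f ^^ l) j" unfolding orbit_of_def by blast
  moreover obtain k where "j = (f ^^ k) i" using assms unfolding orbit_of_def by blast
  ultimately have "x = (f ^^ (l + k)) i" by (simp add: funpow_add)
  then show "x \<in> orbit_of f i" unfolding orbit_of_def by blast
qed

lemma orbit_of_sym:
  assumes "f ^^ p = id" "0 < p" "j \<in> orbit_of f i"
  shows "i \<in> orbit_of f j"
proof -
  obtain k where k: "j = (f ^^ k) i" using assms(3) unfolding orbit_of_def by blast
  have "(f ^^ (p * k - k)) j = (f ^^ (p * k - k + k)) i" by (simp add: k funpow_add)
  also have "\<dots> = ((f ^^ p) ^^ k) i" using assms(2) by (simp add: funpow_mult)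
  also have "\<dots> = i" using assms(1) by simp
  finally show ?thesis unfolding orbit_of_def by blast
qed

lemma orbit_of_eq:
  assumes "f ^^ p = id" "0 < p" "j \<in> orbit_of f i"
  shows "orbit_of f j = orbit_of f i"
  using orbit_of_trans[OF assms(3)] orbit_of_trans[OF orbit_of_sym[OF assms]] by blast

lemma pairwise_disjnt_orbits:
  assumes "f ^^ p = id" "0 < p"
  shows "pairwise disjnt (orbits A f)"
  unfolding pairwise_def disjnt_def orbits_def
  using orbit_of_eq[OF assms] by blast

lemma orbit_of_subset:
  assumes "f ` I \<subseteq> I" "i \<in> I"
  shows "orbit_of f i \<subseteq> I"
proof -
  have "(f ^^ k) i \<in> I" for k using assms by (induction k) auto
  then show ?thesis unfolding orbit_of_def by blast
qed

lemma orbits_finite: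
  assumes "finite I" "f ` I \<subseteq> I" "Q \<in> orbits I f"
  shows "finite Q"
proof -
  obtain i where "i \<in> I" "Q = orbit_of f i" using assms(3) unfolding orbits_def by blast
  then show ?thesis using orbit_of_subset[OF assms(2)] assms(1) finite_subset by metis
qed

lemma orbit_of_funpow_subset: "orbit_of (g ^^ m) i \<subseteq> orbit_of g i"
  unfolding orbit_of_def by (auto simp: funpow_mult)

lemma image_funpow_orbit_of_funpow:
  "(g ^^ k) ` orbit_of (g ^^ m) i = orbit_of (g ^^ m) ((g ^^ k) i)"
proof -
  have comm: "(g ^^ p) ((g ^^ q) x) = (g ^^ q) ((g ^^ p) x)" for p q x
    by (metis add.commute comp_apply funpow_add)
  show ?thesis unfolding orbit_of_def by (auto simp: funpow_mult comm)
qed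

lemma funpow_image: "((`) f ^^ k) A = ((f :: 'a \<Rightarrow> 'a) ^^ k) ` A"
  by (induction k) (simp_all add: image_comp)

lemma orbit_of_image_orbit_of_funpow:
  "orbit_of ((`) g) (orbit_of (g ^^ m) i) = orbits (orbit_of g i) (g ^^ m)"
  unfolding orbit_of_def[of "(`) g"] funpow_image image_funpow_orbit_of_funpow
  unfolding orbits_def orbit_of_def[of g] by blast

lemma orbits_orbits_funpow:
  "orbits (orbits I (g ^^ m)) ((`) g) = (\<lambda>Q. orbits Q (g ^^ m)) ` orbits I g"
  unfolding orbits_def image_image orbit_of_image_orbit_of_funpow[unfolded orbits_def] ..

lemma Union_orbits_orbit_of: "\<Union> (orbits (orbit_of g i) (g ^^ m)) = orbit_of g i"
proof -
  have "orbit_of (g ^^ m) j \<subseteq> orbit_of g i" if "j \<in> orbit_of g i" for j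
    using orbit_of_funpow_subset[of m g j] orbit_of_trans[OF that] by blast
  moreover have "j \<in> orbit_of (g ^^ m) j" for j by (rule orbit_of_self)
  ultimately show ?thesis unfolding orbits_def by blast
qed

lemma Union_orbits_funpow:
  assumes "Q \<in> orbits I g"
  shows "\<Union> (orbits Q (g ^^ m)) = Q"
proof -
  obtain i where "Q = orbit_of g i" using assms unfolding orbits_def by blast
  then show ?thesis by (simp add: Union_orbits_orbit_of)
qed

lemma bij_betw_Union_orbits_funpow:
  "bij_betw Union ((\<lambda>Q. orbits Q (g ^^ m)) ` orbits I g) (orbits I g)"
  by (rule bij_betw_byWitness[where f' = "\<lambda>Q. orbits Q (g ^^ m)"])
    (auto simp: Union_orbits_funpow)

lemma funpow_funpow_eq_id:
  assumes "g ^^ n = id"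
  shows "(g ^^ m) ^^ n = id"
  by (metis assms id_funpow funpow_mult mult.commute)

lemma sum_orbit_of_split:
  assumes "g ^^ n = id" "0 < n" "finite (orbit_of g i)"
  shows "sum h (orbit_of g i) = (\<Sum>\<gamma>\<in>orbits (orbit_of g i) (g ^^ m). sum h \<gamma>)"
proof -
  let ?P = "orbits (orbit_of g i) (g ^^ m)"
  have "\<forall>\<gamma>\<in>?P. finite \<gamma>"
    using assms(3) Union_orbits_orbit_of[of g i m] by (metis Union_upper finite_subset)
  moreover have "\<forall>\<gamma>\<in>?P. \<forall>\<gamma>'\<in>?P. \<gamma> \<noteq> \<gamma>' \<longrightarrow> \<gamma> \<inter> \<gamma>' = {}"
    using pairwise_disjnt_orbits[OF funpow_funpow_eq_id[OF assms(1)] assms(2)]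
    unfolding pairwise_def disjnt_def by blast
  ultimately show ?thesis
    using sum.Union_disjoint[of ?P h] Union_orbits_orbit_of[of g i m] by simp
qed

lemma card_orbit_of_eq_mult:
  assumes "inj g" "g ^^ n = id" "0 < n" "finite (orbit_of g i)"
  shows "card (orbit_of g i)
    = card (orbits (orbit_of g i) (g ^^ m)) * card (orbit_of (g ^^ m) i)"
proof -
  let ?P = "orbits (orbit_of g i) (g ^^ m)"
  have card_suborbit: "card \<gamma> = card (orbit_of (g ^^ m) i)" if \<gamma>: "\<gamma> \<in> ?P" for \<gamma>
  proof -
    obtain k where "\<gamma> = orbit_of (g ^^ m) ((g ^^ k) i)"
      using \<gamma> unfolding orbits_def orbit_of_def[of g] by blast
    then have "\<gamma> = (g ^^ k) ` orbit_of (g ^^ m) i"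
      by (simp add: image_funpow_orbit_of_funpow)
    then show ?thesis by (simp add: card_image inj_on_subset[OF inj_fn[OF assms(1)]])
  qed
  have "card (orbit_of g i) = (\<Sum>\<gamma>\<in>?P. card \<gamma>)"
    using sum_orbit_of_split[OF assms(2-4), of "\<lambda>_. 1::nat" m] by simp
  also have "\<dots> = card ?P * card (orbit_of (g ^^ m) i)"
    using card_suborbit by simp
  finally show ?thesis .
qed

lemma diag_eq_on_orbit_of:
  assumes "g ` I \<subseteq> I" "\<forall>x\<in>I. \<forall>y\<in>I. B (g x) (g y) = B x y" "i \<in> I" "j \<in> orbit_of g i"
  shows "B j j = B i i"
proof -
  have "(g ^^ k) i \<in> I \<and> B ((g ^^ k) i) ((g ^^ k) i) = B i i" for k
    using assms(1-3) by (induction k) auto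
  then show ?thesis using assms(4) unfolding orbit_of_def by blast
qed

lemma induced_form_self_const_diag:
  assumes "i \<in> \<eta>" "\<forall>x\<in>\<eta>. B x x = B i i"
  shows "induced_form B \<eta> \<eta> = B i i * int (card \<eta>)"
proof -
  have "(SOME x. x \<in> \<eta>) \<in> \<eta>" using assms(1) by (rule someI)
  then show ?thesis using assms(2) by (simp add: induced_form_def)
qed

lemma induced_form_induced_form_Union:
  assumes "finite (\<Union>P)" "finite (\<Union>P')" "pairwise disjnt P" "pairwise disjnt P'"
    and "P \<noteq> {}" "{} \<notin> P" "\<Union>P \<inter> \<Union>P' = {}"
  shows "induced_form (induced_form B) P P' = induced_form B (\<Union>P) (\<Union>P')"
proof -
  have neq: "\<gamma> \<noteq> \<gamma>'" if "\<gamma> \<in> P" "\<gamma>' \<in> P'" for \<gamma> \<gamma>'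
  proof
    assume "\<gamma> = \<gamma>'"
    then have "\<gamma> \<subseteq> \<Union>P \<inter> \<Union>P'" using that by blast
    then show False using that(1) assms(6,7) by auto
  qed
  have "\<Union>P \<noteq> {}" using assms(5,6) by (metis Union_empty_conv all_not_in_conv)
  then have "\<Union>P \<noteq> \<Union>P'" using assms(7) by blast
  then have "P \<noteq> P'" by blast
  have sum_Union: "sum h (\<Union>Q) = (\<Sum>\<gamma>\<in>Q. sum h \<gamma>)"
    if "finite (\<Union>Q)" "pairwise disjnt Q" for Q and h :: "'a \<Rightarrow> int"
  proof -
    have "\<forall>\<gamma>\<in>Q. finite \<gamma>" using that(1) by (meson Union_upper finite_subset)
    then show ?thesis
      using sum.Union_disjoint[of Q h] that(2) by (simp add: pairwise_def disjnt_def)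
  qed
  have "induced_form (induced_form B) P P' = (\<Sum>\<gamma>\<in>P. \<Sum>\<gamma>'\<in>P'. \<Sum>x\<in>\<gamma>. \<Sum>y\<in>\<gamma>'. B x y)"
    using \<open>P \<noteq> P'\<close> neq by (simp add: induced_form_def)
  also have "\<dots> = (\<Sum>\<gamma>\<in>P. \<Sum>x\<in>\<gamma>. \<Sum>\<gamma>'\<in>P'. \<Sum>y\<in>\<gamma>'. B x y)"
    by (rule sum.cong[OF refl], rule sum.swap)
  also have "\<dots> = (\<Sum>x\<in>\<Union>P. \<Sum>y\<in>\<Union>P'. B x y)"
    by (simp add: sum_Union assms(1-4))
  also have "\<dots> = induced_form B (\<Union>P) (\<Union>P')"
    using \<open>\<Union>P \<noteq> \<Union>P'\<close> by (simp add: induced_form_def)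
  finally show ?thesis .
qed

lemma induced_form_orbits_funpow_self:
  assumes "finite I" "diagram_aut I B g" "g ^^ n = id" "0 < n" "Q \<in> orbits I g"
  shows "induced_form (induced_form B) (orbits Q (g ^^ m)) (orbits Q (g ^^ m))
    = induced_form B Q Q"
proof -
  have gI: "g ` I \<subseteq> I" "inj g" and inv: "\<forall>x\<in>I. \<forall>y\<in>I. B (g x) (g y) = B x y"
    using assms(2) permutes_image permutes_inj unfolding diagram_aut_def by auto
  obtain i where i: "i \<in> I" "Q = orbit_of g i" using assms(5) unfolding orbits_def by blast
  let ?P = "orbits Q (g ^^ m)"
  \<comment> \<open>the outer form is evaluated at a SOME-chosen suborbit; rebase Q at a point j of it\<close>
  define \<gamma> where "\<gamma> = (SOME \<gamma>. \<gamma> \<in> ?P)"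
  have "\<gamma> \<in> ?P"
    unfolding \<gamma>_def some_in_eq using i(2) orbit_of_self[of i g] unfolding orbits_def by blast
  then obtain j where j: "j \<in> Q" "\<gamma> = orbit_of (g ^^ m) j" unfolding orbits_def by blast
  have Qj: "Q = orbit_of g j" using orbit_of_eq[OF assms(3,4)] i j(1) by blast
  have "j \<in> I" using j(1) i orbit_of_subset[OF gI(1)] by blast
  then have diag: "\<forall>x\<in>Q. B x x = B j j"
    using diag_eq_on_orbit_of[OF gI(1) inv] Qj by blast
  have "\<gamma> \<subseteq> Q" using j(2) orbit_of_funpow_subset[of m g j] Qj by blast
  then have "\<forall>x\<in>\<gamma>. B x x = B j j" using diag by blast
  moreover have "j \<in> \<gamma>" unfolding j(2) by (rule orbit_of_self)
  ultimately have "induced_form B \<gamma> \<gamma> = B j j * int (card \<gamma>)"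
    by (intro induced_form_self_const_diag)
  then have "induced_form (induced_form B) ?P ?P = B j j * int (card \<gamma> * card ?P)"
    using \<gamma>_def by (simp add: induced_form_def[of "induced_form B"])
  also have "\<dots> = B j j * int (card Q)"
    using card_orbit_of_eq_mult[OF gI(2) assms(3,4), of j m]
      orbits_finite[OF assms(1) gI(1) assms(5)] Qj j(2)
    by (simp add: mult.commute)
  also have "\<dots> = induced_form B Q Q"
    using induced_form_self_const_diag[of j Q B, OF j(1) diag] by simp
  finally show ?thesis .
qed

lemma induced_form_orbits_funpow_distinct:
  assumes "finite I" "g ` I \<subseteq> I" "g ^^ n = id" "0 < n"
    and Q: "Q \<in> orbits I g" and Q': "Q' \<in> orbits I g" and "Q \<noteq> Q'"
  shows "induced_form (induced_form B) (orbits Q (g ^^ m)) (orbits Q' (g ^^ m))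
    = induced_form B Q Q'"
proof -
  let ?P = "orbits Q (g ^^ m)" and ?P' = "orbits Q' (g ^^ m)"
  have unions: "\<Union>?P = Q" "\<Union>?P' = Q'" using Union_orbits_funpow Q Q' by blast+
  have "pairwise disjnt ?P" "pairwise disjnt ?P'"
    using pairwise_disjnt_orbits[OF funpow_funpow_eq_id[OF assms(3)] assms(4)] by blast+
  moreover have "finite Q" "finite Q'" using orbits_finite[OF assms(1,2)] Q Q' by blast+
  moreover obtain i where "Q = orbit_of g i" using Q unfolding orbits_def by blast
  then have "?P \<noteq> {}" using orbit_of_self[of i g] unfolding orbits_def by blast
  moreover have "{} \<notin> ?P"
    unfolding orbits_def using orbit_of_self[of _ "g ^^ m"] by (metis empty_iff imageE)
  moreover have "Q \<inter> Q' = {}"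
    using pairwise_disjnt_orbits[OF assms(3,4)] Q Q' assms(7) unfolding pairwise_def disjnt_def by blast
  ultimately have "induced_form (induced_form B) ?P ?P' = induced_form B (\<Union>?P) (\<Union>?P')"
    by (intro induced_form_induced_form_Union) (simp_all add: unions)
  then show ?thesis by (simp add: unions)
qed

lemma induced_form_orbits_funpow:
  assumes "finite I" "diagram_aut I B g" "g ^^ n = id" "0 < n"
    and "Q \<in> orbits I g" "Q' \<in> orbits I g"
  shows "induced_form (induced_form B) (orbits Q (g ^^ m)) (orbits Q' (g ^^ m))
    = induced_form B Q Q'"
proof (cases "Q = Q'")
  case True
  then show ?thesis using induced_form_orbits_funpow_self[OF assms(1-5)] by simp
next
  case False
  have "g ` I \<subseteq> I" using assms(2) permutes_image unfolding diagram_aut_def by auto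
  from induced_form_orbits_funpow_distinct[OF assms(1) this assms(3-6) False] show ?thesis .
qed

theorem lemma2p4:
  fixes I :: "'a set" and B :: "'a \<Rightarrow> 'a \<Rightarrow> int" and \<sigma> :: "'a \<Rightarrow> 'a"
    and n a m :: nat
  assumes "cartan_datum I B"
    and "admissible I B \<sigma>"
    and "perm_order_is \<sigma> n"
    and "n = a * m"
  defines "\<tau> \<equiv> \<sigma> ^^ m"
  defines "I\<tau> \<equiv> orbits I \<tau>"
  defines "B\<tau> \<equiv> induced_form B"
  defines "\<sigma>u \<equiv> (\<lambda>\<gamma>. \<sigma> ` \<gamma>)"
  shows "bij_betw (\<lambda>\<eta>t. \<Union>\<eta>t) (orbits I\<tau> \<sigma>u) (orbits I \<sigma>)
    \<and> (\<forall>\<eta>t\<in>orbits I\<tau> \<sigma>u. \<forall>\<eta>t'\<in>orbits I\<tau> \<sigma>u.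
          induced_form B\<tau> \<eta>t \<eta>t' = induced_form B (\<Union>\<eta>t) (\<Union>\<eta>t'))
    \<and> cartan_iso (orbits I\<tau> \<sigma>u) (induced_form B\<tau>) (orbits I \<sigma>) (induced_form B)"
proof -
  have "finite I" "diagram_aut I B \<sigma>" "\<sigma> ^^ n = id" "0 < n"
    using assms(1-3) unfolding cartan_datum_def admissible_def perm_order_is_def by auto
  have suborbits: "orbits I\<tau> \<sigma>u = (\<lambda>Q. orbits Q \<tau>) ` orbits I \<sigma>"
    unfolding I\<tau>_def \<sigma>u_def \<tau>_def by (rule orbits_orbits_funpow)
  have bij: "bij_betw Union (orbits I\<tau> \<sigma>u) (orbits I \<sigma>)"
    unfolding suborbits \<tau>_def by (rule bij_betw_Union_orbits_funpow)
  have form: "\<forall>\<eta>t\<in>orbits I\<tau> \<sigma>u. \<forall>\<eta>t'\<in>orbits I\<tau> \<sigma>u.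
      induced_form B\<tau> \<eta>t \<eta>t' = induced_form B (\<Union>\<eta>t) (\<Union>\<eta>t')"
    unfolding suborbits B\<tau>_def \<tau>_def
    by (simp add: Union_orbits_funpow induced_form_orbits_funpow[OF \<open>finite I\<close>
      \<open>diagram_aut I B \<sigma>\<close> \<open>\<sigma> ^^ n = id\<close> \<open>0 < n\<close>])
  have "cartan_iso (orbits I\<tau> \<sigma>u) (induced_form B\<tau>) (orbits I \<sigma>) (induced_form B)"
    unfolding cartan_iso_def using bij form by (intro exI[of _ Union] conjI) auto
  with bij form show ?thesis by blast
qed

end
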